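(* Let $P$ be a non-abelian exponent-critical $p$-group of type $\mathcal{A}$, let $p^m=\exp(P)$, and let $A$ be a maximal subgroup of $P$ containing an element of order $p^m$. Then: (i) $A$ is abelian, normal in $P$, and contains all elements of $P$ of order $p^m$; (ii) $A\cong Z_{p^m}\times S$ for some group $S$ of exponent dividing $p^{m-1}$; (iii) $P'$ is abelian of exponent dividing $p^{m-1}$.
   Context: A finite group $G$ is exponent-critical if $\exp(G)$ is not the least common multiple of the exponents of the proper non-abelian subgroups of $G$. An exponent-critical $p$-group is of type $\mathcal{A}$ if it has exactly one abelian maximal subgroup. $Z_{p^m}$ denotes the cyclic group of order $p^m$. *)

theory Defs
  imports "HOL-Algebra.Algebra"
begin

definition group_exponent :: "('a, 'b) monoid_scheme \<Rightarrow> nat" where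
  "group_exponent G = Lcm (group.ord G ` carrier G)"

definition proper_nonabelian_subgroups :: "('a, 'b) monoid_scheme \<Rightarrow> 'a set set" where
  "proper_nonabelian_subgroups G =
     {H. subgroup H G \<and> H \<noteq> carrier G \<and> \<not> comm_group (subgroup_generated G H)}"

definition exponent_critical :: "('a, 'b) monoid_scheme \<Rightarrow> bool" where
  "exponent_critical G \<longleftrightarrow>
     group_exponent G \<noteq>
       Lcm ((\<lambda>H. group_exponent (subgroup_generated G H)) ` proper_nonabelian_subgroups G)"

definition maximal_subgroup :: "'a set \<Rightarrow> ('a, 'b) monoid_scheme \<Rightarrow> bool" where
  "maximal_subgroup H G \<longleftrightarrow> subgroup H G \<and> H \<noteq> carrier G \<and>
     (\<forall>K. subgroup K G \<and> H \<subseteq> K \<longrightarrow> K = H \<or> K = carrier G)"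

definition p_group :: "nat \<Rightarrow> ('a, 'b) monoid_scheme \<Rightarrow> bool" where
  "p_group p G \<longleftrightarrow> group G \<and> Factorial_Ring.prime p \<and> finite (carrier G) \<and> (\<exists>n. order G = p ^ n)"

definition type_A :: "('a, 'b) monoid_scheme \<Rightarrow> bool" where
  "type_A G \<longleftrightarrow> (\<exists>!H. maximal_subgroup H G \<and> comm_group (subgroup_generated G H))"

end

theory Submission
  imports Defs
begin

text \<open>
  A non-abelian proper subgroup containing an element of order \<open>p\<^sup>m = exp P\<close> would already
  realise the exponent, so every proper subgroup containing such an element is abelian. In
  particular \<open>A\<close> is abelian, and every element of order \<open>p\<^sup>m\<close> lies in some maximal subgroup,
  which is then abelian and hence equal to \<open>A\<close> because \<open>P\<close> is of type \<open>\<A>\<close>. An element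
  outside \<open>A\<close> lies in a maximal subgroup \<open>M \<noteq> A\<close>, which is therefore non-abelian and of
  exponent dividing \<open>p\<^sup>m\<^sup>-\<^sup>1\<close>. Maximal subgroups of \<open>p\<close>-groups are normal with cyclic quotient,
  so \<open>P' \<subseteq> A \<inter> M\<close>, which gives (iii). Finally \<open>\<langle>a\<rangle>\<close> is a direct factor of the abelian
  \<open>p\<close>-group \<open>A\<close>, and \<open>P = \<langle>a\<rangle>M\<close> shows that a complement has exponent dividing
  \<open>p\<^sup>m\<^sup>-\<^sup>1\<close>, which gives (ii).
\<close>

lemma (in group) finite_subgroupI:
  assumes "finite (carrier G)" "S \<subseteq> carrier G" "\<one> \<in> S"
    and "\<And>x y. x \<in> S \<Longrightarrow> y \<in> S \<Longrightarrow> x \<otimes> y \<in> S"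
  shows "subgroup S G"
proof
  fix x assume x: "x \<in> S"
  then have xc: "x \<in> carrier G" using assms(2) by blast
  have pow: "x [^] (k::nat) \<in> S" for k
    by (induction k) (simp_all add: assms(3,4) x)
  have "ord x \<ge> 1" using ord_ge_1[OF assms(1) xc] .
  then have "x [^] (ord x - 1) \<otimes> x = \<one>"
    using xc by (metis Suc_diff_le diff_Suc_1 nat_pow_Suc pow_ord_eq_1)
  then have "inv x = x [^] (ord x - 1)"
    using xc by (simp add: inv_equality)
  then show "inv x \<in> S" using pow by simp
qed (use assms in auto)

lemma (in group) subgroup_nat_pow_closed:
  "subgroup H G \<Longrightarrow> h \<in> H \<Longrightarrow> h [^] (n::nat) \<in> H"
  using subgroup_int_pow_closed[of H h "int n"] by (simp add: int_pow_int)

lemma (in group) generate_pow_nat_finite: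
  assumes "finite (carrier G)" "a \<in> carrier G"
  shows "generate G {a} = {a [^] k | k::nat. True}"
  using generate_pow_nat[OF assms(2)] ord_ge_1[OF assms] by simp

lemma (in group) subgroups_subset_set_mult:
  assumes "subgroup H G" "subgroup K G"
  shows "H \<subseteq> H <#> K" "K \<subseteq> H <#> K"
proof
  fix h assume "h \<in> H"
  then have "h = h \<otimes> \<one>" using subgroup.mem_carrier[OF assms(1)] by simp
  then show "h \<in> H <#> K"
    using \<open>h \<in> H\<close> subgroup.one_closed[OF assms(2)] unfolding set_mult_def by blast
next
  show "K \<subseteq> H <#> K"
  proof
    fix k assume "k \<in> K"
    then have "k = \<one> \<otimes> k" using subgroup.mem_carrier[OF assms(2)] by simp
    then show "k \<in> H <#> K"
      using \<open>k \<in> K\<close> subgroup.one_closed[OF assms(1)] unfolding set_mult_def by blast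
  qed
qed

lemma (in group) subgroup_generated_eq_carrier_update:
  assumes "subgroup H G"
  shows "subgroup_generated G H = G\<lparr>carrier := H\<rparr>"
  using subgroup.carrier_subgroup_generated_subgroup[OF assms]
  by (simp add: subgroup_generated_def carrier_subgroup_generated)

lemma (in group_hom) subgroup_vimage:
  assumes "subgroup K H"
  shows "subgroup {x \<in> carrier G. h x \<in> K} G"
  using assms by (intro G.subgroupI) (auto simp: subgroup.one_closed subgroup.m_inv_closed subgroup.m_closed)

lemma (in group) pow_mem_subgroup_prime_dvd:
  assumes K: "subgroup K G" and p: "Factorial_Ring.prime p"
    and y: "y \<in> carrier G" "y \<notin> K" "y [^] p \<in> K" and i: "y [^] (i::nat) \<in> K"
  shows "p dvd i"
proof (rule ccontr)
  assume "\<not> p dvd i"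
  then have "coprime (int p) (int i)" using p prime_imp_coprime by auto
  then obtain u v :: int where uv: "u * int p + v * int i = 1"
    using bezout_int[of "int p" "int i"] by auto
  have "y = y [^] (u * int p + v * int i)" using uv y(1) by simp
  also have "\<dots> = (y [^] int p) [^] u \<otimes> (y [^] int i) [^] v"
    using y(1) by (simp add: int_pow_mult int_pow_pow mult.commute)
  also have "\<dots> \<in> K"
    using K y(3) i by (simp add: int_pow_int subgroup_int_pow_closed subgroup.m_closed)
  finally show False using y(2) by simp
qed

lemma (in group) maximal_subgroup_exists:
  assumes "finite (carrier G)" "subgroup K G" "K \<noteq> carrier G"
  shows "\<exists>M. maximal_subgroup M G \<and> K \<subseteq> M"
proof -
  let ?\<M> = "{M. subgroup M G \<and> M \<noteq> carrier G}"
  have "finite ?\<M>"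
    using assms(1) subgroup.subset by (blast intro: finite_subset[of _ "Pow (carrier G)"])
  then obtain M where "M \<in> ?\<M>" "K \<subseteq> M" "\<forall>M' \<in> ?\<M>. M \<subseteq> M' \<longrightarrow> M = M'"
    using finite_has_maximal2[of ?\<M> K] assms(2,3) by blast
  then show ?thesis unfolding maximal_subgroup_def by blast
qed

lemma (in group) noncomm_exists_maximal_subgroup_mem:
  assumes "finite (carrier G)" "\<not> comm_group G" "x \<in> carrier G"
  shows "\<exists>M. maximal_subgroup M G \<and> x \<in> M"
proof -
  have "generate G {x} \<noteq> carrier G"
  proof
    assume "generate G {x} = carrier G"
    then have "carrier G = range (\<lambda>n::int. x [^] n)"
      using generate_pow[OF assms(3)] by (simp add: full_SetCompr_eq)
    then have "cyclic_group G"
      using assms(3) cyclic_group by blast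
    then show False using assms(2) cyclic_imp_abelian_group by blast
  qed
  moreover have "subgroup (generate G {x}) G" using assms(3) by (simp add: generate_is_subgroup)
  ultimately obtain M where "maximal_subgroup M G" "generate G {x} \<subseteq> M"
    using maximal_subgroup_exists[OF assms(1)] by blast
  moreover have "x \<in> generate G {x}" by (rule generate.incl) simp
  ultimately show ?thesis by blast
qed

lemma (in group) ord_dvd_group_exponent:
  "x \<in> carrier G \<Longrightarrow> ord x dvd group_exponent G"
  unfolding group_exponent_def by (rule dvd_Lcm) simp

lemma (in group) ord_subgroup_generated:
  "group.ord (subgroup_generated G H) x = ord x"
  unfolding group.ord_def[OF group_subgroup_generated] ord_def
  by (simp add: pow_subgroup_generated)

lemma (in group) group_exponent_subgroup_generated:
  assumes "subgroup H G"
  shows "group_exponent (subgroup_generated G H) = Lcm (ord ` H)"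
  unfolding group_exponent_def ord_subgroup_generated
    subgroup.carrier_subgroup_generated_subgroup[OF assms] ..

lemma (in group_hom) ord_inj_hom:
  assumes "inj_on h (carrier G)" "x \<in> carrier G"
  shows "H.ord (h x) = G.ord x"
proof -
  have "h x [^]\<^bsub>H\<^esub> n = \<one>\<^bsub>H\<^esub> \<longleftrightarrow> G.ord x dvd n" for n :: nat
  proof -
    have "h x [^]\<^bsub>H\<^esub> n = \<one>\<^bsub>H\<^esub> \<longleftrightarrow> h (x [^] n) = h \<one>"
      using assms(2) by (simp add: hom_nat_pow)
    also have "\<dots> \<longleftrightarrow> x [^] n = \<one>"
      using inj_on_eq_iff[OF assms(1), of "x [^] n" \<one>] assms(2) by simp
    finally show ?thesis using G.pow_eq_id[OF assms(2)] by simp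
  qed
  then show ?thesis using H.ord_unique assms(2) by simp
qed

lemma group_exponent_iso:
  assumes "group G" "group H" "G \<cong> H"
  shows "group_exponent G = group_exponent H"
proof -
  obtain f where f: "f \<in> iso G H" using assms(3) unfolding is_iso_def by blast
  interpret group_hom G H f
    using assms(1,2) f by (simp add: group_hom_def group_hom_axioms_def iso_def)
  have bij: "bij_betw f (carrier G) (carrier H)" using f by (simp add: iso_def)
  have "group.ord H ` carrier H = (\<lambda>x. group.ord H (f x)) ` carrier G"
    using bij_betw_imp_surj_on[OF bij] by (simp add: image_image[symmetric])
  also have "\<dots> = group.ord G ` carrier G"
    using ord_inj_hom bij_betw_imp_inj_on[OF bij] by auto
  finally show ?thesis unfolding group_exponent_def by simp
qed

lemma (in group) image_group_id:
  shows "group (image_group id G)" "G \<cong> image_group id G"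
    and "group_exponent (image_group id G) = group_exponent G"
proof -
  show "group (image_group id G)" by (rule inj_imp_image_group_is_group) simp
  moreover show "G \<cong> image_group id G" by (rule is_isoI[OF inj_imp_image_group_iso]) simp
  ultimately show "group_exponent (image_group id G) = group_exponent G"
    using group_exponent_iso is_group by metis
qed

lemma (in group) exponent_critical_subgroup_comm:
  assumes "exponent_critical G" "subgroup H G" "H \<noteq> carrier G"
    and "x \<in> H" "ord x = group_exponent G"
  shows "comm_group (subgroup_generated G H)"
proof (rule ccontr)
  assume "\<not> comm_group (subgroup_generated G H)"
  then have H: "H \<in> proper_nonabelian_subgroups G"
    unfolding proper_nonabelian_subgroups_def using assms(2,3) by blast
  let ?exps = "(\<lambda>K. group_exponent (subgroup_generated G K)) ` proper_nonabelian_subgroups G"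
  have sub_dvd: "group_exponent (subgroup_generated G K) dvd group_exponent G" if "subgroup K G" for K
    using that ord_dvd_group_exponent subgroup.subset
    by (auto simp: group_exponent_subgroup_generated[OF that] Lcm_dvd_iff)
  have "ord x dvd Lcm (ord ` H)" using assms(4) by (simp add: dvd_Lcm)
  then have "group_exponent G dvd group_exponent (subgroup_generated G H)"
    using assms(5) by (simp add: group_exponent_subgroup_generated[OF assms(2)])
  moreover have "group_exponent (subgroup_generated G H) dvd Lcm ?exps"
    using H by (blast intro: dvd_Lcm)
  ultimately have "group_exponent G dvd Lcm ?exps" by (rule dvd_trans)
  moreover have "Lcm ?exps dvd group_exponent G"
    using sub_dvd unfolding Lcm_dvd_iff proper_nonabelian_subgroups_def by blast
  ultimately have "group_exponent G = Lcm ?exps" by (rule dvd_antisym)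
  then show False
    using assms(1) unfolding exponent_critical_def by blast
qed

section \<open>Maximal subgroups of finite \<open>p\<close>-groups\<close>

lemma (in group) p_group_ord:
  assumes "p_group p G" "x \<in> carrier G"
  shows "\<exists>k. ord x = p ^ k"
  using assms ord_dvd_group_order[OF assms(2)] divides_primepow_nat
  unfolding p_group_def by metis

lemma (in group) p_group_subgroup:
  assumes "p_group p G" "subgroup H G"
  shows "p_group p (G\<lparr>carrier := H\<rparr>)"
proof -
  obtain n where "order G = p ^ n" "Factorial_Ring.prime p" "finite (carrier G)"
    using assms(1) unfolding p_group_def by blast
  moreover have "card H dvd order G"
    using lagrange[OF assms(2)] by (metis dvd_triv_right)
  ultimately obtain k where "card H = p ^ k"
    using divides_primepow_nat by metis
  then show ?thesis
    using assms subgroup.subgroup_is_group[OF assms(2) is_group]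
      finite_subset[OF subgroup.subset[OF assms(2)]]
    unfolding p_group_def order_def by auto
qed

lemma (in group) p_group_prime_dvd_index:
  assumes "p_group p G" "subgroup H G" "H \<noteq> carrier G"
  shows "p dvd card (rcosets H)"
proof -
  obtain n where n: "order G = p ^ n" and p: "Factorial_Ring.prime p" and fin: "finite (carrier G)"
    using assms(1) unfolding p_group_def by blast
  have lag: "card (rcosets H) * card H = p ^ n"
    using lagrange[OF assms(2)] n by simp
  then obtain i where i: "card (rcosets H) = p ^ i"
    using p divides_primepow_nat by (metis dvd_triv_left)
  have "card H < card (carrier G)"
    using assms(2,3) fin subgroup.subset by (metis psubsetI psubset_card_mono)
  then have "i \<noteq> 0" using lag i n unfolding order_def by (cases "i = 0") auto
  then show ?thesis using i by simp
qed

lemma (in group) p_group_exists_pow_prime_mem: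
  assumes "p_group p G" "subgroup K G" "K \<noteq> carrier G"
  shows "\<exists>x \<in> carrier G - K. x [^] p \<in> K"
proof -
  obtain z where z: "z \<in> carrier G" "z \<notin> K"
    using assms(2,3) subgroup.subset by blast
  obtain k where "ord z = p ^ k" using p_group_ord[OF assms(1) z(1)] by blast
  then have "z [^] (p ^ k) \<in> K"
    using z(1) pow_ord_eq_1 subgroup.one_closed[OF assms(2)] by metis
  then obtain j where "z [^] (p ^ j) \<notin> K" "z [^] (p ^ Suc j) \<in> K"
    using ex_least_nat_less[of "\<lambda>i. z [^] (p ^ i) \<in> K"] z by auto
  then show ?thesis
    using z(1) by (intro bexI[of _ "z [^] (p ^ j)"]) (auto simp: nat_pow_pow mult.commute)
qed

lemma (in group) p_group_ord_dvd_pred_exponent: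
  assumes "p_group p G" "group_exponent G = p ^ m" "x \<in> carrier G" "ord x \<noteq> p ^ m"
  shows "ord x dvd p ^ (m - 1)"
proof -
  obtain j where j: "ord x = p ^ j" using p_group_ord[OF assms(1,3)] by blast
  have "p > 1" using assms(1) prime_gt_1_nat unfolding p_group_def by blast
  moreover have "p ^ j dvd p ^ m" using ord_dvd_group_exponent[OF assms(3)] assms(2) j by simp
  ultimately have "j \<le> m" using power_dvd_imp_le by blast
  then have "j \<le> m - 1" using assms(4) j by (cases "j = m") auto
  then show ?thesis using j by (simp add: le_imp_power_dvd)
qed

lemma (in group_action) p_group_card_orbit_cong:
  assumes "p_group p G" "orb \<in> orbits G E \<phi>"
  shows "card orb mod p = card (orb \<inter> {x \<in> E. \<forall>g \<in> carrier G. \<phi> g x = x}) mod p"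
proof -
  let ?F = "{x \<in> E. \<forall>g \<in> carrier G. \<phi> g x = x}"
  obtain x where x: "x \<in> E" "orb = orbit G \<phi> x"
    using assms(2) unfolding orbits_def by blast
  show ?thesis
  proof (cases "x \<in> ?F")
    case True
    then have "orb = {x}"
      using x orbit_refl[OF x(1)] unfolding orbit_def by auto
    then show ?thesis using True by simp
  next
    case False
    then obtain g where g: "g \<in> carrier G" "\<phi> g x \<noteq> x" using x(1) by blast
    have "x \<in> orb" "\<phi> g x \<in> orb"
      using x g orbit_refl unfolding orbit_def by auto
    then have "card orb \<noteq> 1" using g(2) by (metis card_1_singletonE singletonD)
    moreover have "card orb * card (stabilizer G \<phi> x) = p ^ n" if "order G = p ^ n" for n
      using orbit_stabilizer_theorem[OF x(1)] x(2) that by simp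
    then obtain i where "card orb = p ^ i"
      using assms(1) divides_primepow_nat unfolding p_group_def by (metis dvd_triv_left)
    ultimately have "p dvd card orb" by (cases i) auto
    moreover have "orb \<inter> ?F = {}"
    proof (rule ccontr)
      assume "orb \<inter> ?F \<noteq> {}"
      then obtain y where y: "y \<in> orb" "y \<in> ?F" by blast
      then have "x \<in> orbit G \<phi> y" using orbit_sym x by blast
      then show False using y(2) False unfolding orbit_def by auto
    qed
    ultimately show ?thesis by simp
  qed
qed

lemma (in group_action) p_group_card_fixed_points_cong:
  assumes "p_group p G" "finite E"
  shows "card {x \<in> E. \<forall>g \<in> carrier G. \<phi> g x = x} mod p = card E mod p"
proof -
  let ?F = "{x \<in> E. \<forall>g \<in> carrier G. \<phi> g x = x}"
  have card_E: "card E = (\<Sum>orb\<in>orbits G E \<phi>. card orb)"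
    using disjoint_sum[OF assms(2), of "\<lambda>_. 1::nat"] by simp
  have "finite orb" if "orb \<in> orbits G E \<phi>" for orb
    using that orbits_coverture assms(2) by (metis Union_upper finite_subset)
  then have card_F: "card ?F = (\<Sum>orb\<in>orbits G E \<phi>. card (orb \<inter> ?F))"
    using disjoint_sum[OF assms(2), of "\<lambda>x. of_bool (x \<in> ?F) :: nat"] assms(2)
    by (simp add: Collect_conj_eq Int_absorb1)
  have "card E mod p = (\<Sum>orb\<in>orbits G E \<phi>. card orb mod p) mod p"
    unfolding card_E by (rule mod_sum_eq[symmetric])
  also have "\<dots> = (\<Sum>orb\<in>orbits G E \<phi>. card (orb \<inter> ?F) mod p) mod p"
    using p_group_card_orbit_cong[OF assms(1)] by (simp cong: sum.cong)
  also have "\<dots> = card ?F mod p"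
    unfolding card_F by (rule mod_sum_eq)
  finally show ?thesis ..
qed

lemma (in group) rcosets_action:
  assumes "subgroup H G"
  shows "group_action G (rcosets H) (\<lambda>g. \<lambda>C \<in> rcosets H. C #> inv g)"
proof -
  let ?E = "rcosets H" and ?\<phi> = "\<lambda>g. \<lambda>C \<in> rcosets H. C #> inv g"
  have Hc: "H \<subseteq> carrier G" using assms subgroup.subset by blast
  have Ec: "C \<subseteq> carrier G" if "C \<in> ?E" for C
    using that assms subgroup.rcosets_carrier is_group by blast
  have closed: "C #> x \<in> ?E" if "C \<in> ?E" "x \<in> carrier G" for C x
    using that Hc by (auto simp: RCOSETS_def coset_mult_assoc intro: rcosetsI)
  have cancel: "(C #> x) #> inv x = C" "(C #> inv x) #> x = C" if "C \<in> ?E" "x \<in> carrier G" for C x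
    using that Ec by (simp_all add: coset_mult_assoc)
  have bij: "?\<phi> g \<in> Bij ?E" if g: "g \<in> carrier G" for g
  proof -
    have "bij_betw (\<lambda>C. C #> inv g) ?E ?E"
    proof (rule bij_betw_byWitness[where f'="\<lambda>C. C #> g"])
      show "\<forall>C\<in>?E. C #> inv g #> g = C" using cancel(2) g by simp
      show "\<forall>C\<in>?E. C #> g #> inv g = C" using cancel(1) g by simp
      show "(\<lambda>C. C #> inv g) ` ?E \<subseteq> ?E" "(\<lambda>C. C #> g) ` ?E \<subseteq> ?E"
        using closed g by auto
    qed
    then show ?thesis
      by (simp add: Bij_def)
  qed
  have "?\<phi> \<in> hom G (BijGroup ?E)"
  proof (rule homI)
    fix x y assume xy: "x \<in> carrier G" "y \<in> carrier G"
    have "?\<phi> (x \<otimes> y) = compose ?E (?\<phi> x) (?\<phi> y)"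
    proof
      fix C show "?\<phi> (x \<otimes> y) C = compose ?E (?\<phi> x) (?\<phi> y) C"
        using xy closed[of C "inv y"] Ec[of C]
        by (simp add: compose_def coset_mult_assoc inv_mult_group)
    qed
    then show "?\<phi> (x \<otimes> y) = ?\<phi> x \<otimes>\<^bsub>BijGroup ?E\<^esub> ?\<phi> y"
      using bij xy by (simp add: BijGroup_def)
  qed (use bij in \<open>simp add: BijGroup_def\<close>)
  then show ?thesis
    unfolding group_action_def group_hom_def group_hom_axioms_def
    using is_group group_BijGroup by blast
qed

lemma (in group) rcoset_fixed_imp_normalizes:
  assumes H: "subgroup H G" and g: "g \<in> carrier G"
    and fixed: "\<forall>h \<in> H. H #> g #> h = H #> g" and h: "h \<in> H"
  shows "g \<otimes> h \<otimes> inv g \<in> H"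
proof -
  have Hc: "H \<subseteq> carrier G" using H subgroup.subset by blast
  have hc: "h \<in> carrier G" using h Hc by auto
  have "H #> (g \<otimes> h) = H #> g #> h"
    using coset_mult_assoc[OF Hc g hc] by simp
  also have "\<dots> = H #> g" using fixed h by blast
  finally have "H #> (g \<otimes> h) = H #> g" .
  then have "g \<otimes> h \<in> H #> g"
    using rcos_self[of "g \<otimes> h" H] H g hc by auto
  then show ?thesis
    using subgroup.rcos_module_imp[OF H is_group g] by blast
qed

text \<open>\<open>H\<close> acts on its right cosets. The number of fixed cosets is congruent to the index, hence
  divisible by \<open>p\<close>; so besides \<open>H\<close> some coset \<open>H g\<close> is fixed, and then \<open>g\<close> normalises \<open>H\<close>.\<close>
lemma (in group) p_group_normalizer_grows:
  assumes "p_group p G" "subgroup H G" "H \<noteq> carrier G"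
  shows "\<exists>g \<in> carrier G - H. \<forall>h \<in> H. g \<otimes> h \<otimes> inv g \<in> H"
proof -
  let ?\<phi> = "\<lambda>g. \<lambda>C \<in> rcosets H. C #> inv g"
  define F where "F = {C \<in> rcosets H. \<forall>h \<in> H. ?\<phi> h C = C}"
  have Hc: "H \<subseteq> carrier G" using assms(2) subgroup.subset by blast
  interpret act: group_action "G\<lparr>carrier := H\<rparr>" "rcosets H" ?\<phi>
    using group_action.induced_action[OF rcosets_action assms(2)] assms(2) .
  have p: "Factorial_Ring.prime p" and fin: "finite (carrier G)"
    using assms(1) unfolding p_group_def by auto
  have "finite (rcosets H)"
    using fin Hc by (meson finite_Pow_iff finite_subset rcosets_subset_PowG assms(2))
  then have "card F mod p = card (rcosets H) mod p" unfolding F_def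
    using act.p_group_card_fixed_points_cong[OF p_group_subgroup[OF assms(1,2)]] by simp
  then have "p dvd card F"
    using p_group_prime_dvd_index[OF assms] by (simp add: mod_eq_0_iff_dvd)
  moreover have H_fixed: "H \<in> F"
    unfolding F_def using assms(2) Hc
    by (auto simp: subgroup.subgroup_in_rcosets[OF assms(2) is_group]
        coset_join2 subgroup.m_inv_closed subsetD)
  moreover have "finite F" using \<open>finite (rcosets H)\<close> unfolding F_def by simp
  ultimately have "p \<le> card F"
    by (intro dvd_imp_le) (auto simp: card_gt_0_iff)
  then have "\<not> F \<subseteq> {H}"
    using prime_ge_2_nat[OF p] card_mono[of "{H}" F] by auto
  then obtain C where C: "C \<in> F" "C \<noteq> H" by blast
  then obtain g where g: "g \<in> carrier G" "C = H #> g"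
    unfolding F_def RCOSETS_def by blast
  have "g \<notin> H" using g C(2) coset_join2 assms(2) by auto
  moreover have "\<forall>h \<in> H. H #> g #> h = H #> g"
  proof
    fix h assume h: "h \<in> H"
    then have "C #> inv (inv h) = C"
      using C(1) subgroup.m_inv_closed[OF assms(2) h] unfolding F_def by auto
    then show "H #> g #> h = H #> g" using g(2) h Hc by (simp add: subsetD)
  qed
  ultimately show ?thesis
    using rcoset_fixed_imp_normalizes[OF assms(2) g(1)] g(1) by blast
qed

lemma (in group) p_group_maximal_subgroup_normal:
  assumes "p_group p G" "maximal_subgroup M G"
  shows "M \<lhd> G"
proof -
  have M: "subgroup M G" "M \<noteq> carrier G"
    using assms(2) unfolding maximal_subgroup_def by auto
  have Mc: "M \<subseteq> carrier G" using M(1) subgroup.subset by blast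
  define N where "N = {x \<in> carrier G. \<forall>h \<in> M. x \<otimes> h \<otimes> inv x \<in> M}"
  have "subgroup N G"
  proof (rule finite_subgroupI)
    show "finite (carrier G)" using assms(1) unfolding p_group_def by blast
    show "N \<subseteq> carrier G" "\<one> \<in> N" unfolding N_def using Mc by auto
    fix x y assume xy: "x \<in> N" "y \<in> N"
    then have xyc: "x \<in> carrier G" "y \<in> carrier G" unfolding N_def by auto
    have "x \<otimes> y \<otimes> h \<otimes> inv (x \<otimes> y) = x \<otimes> (y \<otimes> h \<otimes> inv y) \<otimes> inv x" if "h \<in> M" for h
      using xyc that Mc by (simp add: m_assoc inv_mult_group subsetD)
    then show "x \<otimes> y \<in> N"
      using xy xyc unfolding N_def by auto
  qed
  moreover have "M \<subseteq> N"
    unfolding N_def using M(1) Mc by (auto simp: subgroup.m_closed subgroup.m_inv_closed)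
  moreover obtain g where "g \<in> N - M"
    using p_group_normalizer_grows[OF assms(1) M] unfolding N_def by blast
  ultimately have "N = carrier G"
    using assms(2) unfolding maximal_subgroup_def by blast
  then show ?thesis
    using M(1) unfolding normal_inv_iff N_def by blast
qed

lemma (in normal) maximal_subgroup_rcoset_pow:
  assumes "maximal_subgroup H G" "y \<in> carrier G" "y \<notin> H" "x \<in> carrier G"
  shows "\<exists>i::int. H #> x = H #> y [^] i"
proof -
  interpret Q: group "G Mod H" by (rule factorgroup_is_group)
  interpret \<pi>: group_hom G "G Mod H" "(#>) H"
    by (simp add: group_hom_def group_hom_axioms_def is_group Q.is_group r_coset_hom_Mod)
  have yQ: "H #> y \<in> carrier (G Mod H)" using assms(2) by (simp add: FactGroup_def rcosetsI subset)
  let ?K = "{x \<in> carrier G. H #> x \<in> generate (G Mod H) {H #> y}}"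
  have "subgroup ?K G"
    using \<pi>.subgroup_vimage Q.generate_is_subgroup yQ by simp
  moreover have "H \<subseteq> ?K"
    using coset_join2[OF _ subgroup_axioms] generate.one[of "G Mod H"] subset by auto
  moreover have "y \<in> ?K" using assms(2) generate.incl[of "H #> y" "{H #> y}"] by simp
  ultimately have "?K = carrier G"
    using assms(1,3) unfolding maximal_subgroup_def by blast
  then have "H #> x \<in> generate (G Mod H) {H #> y}" using assms(4) by blast
  then show ?thesis
    using Q.generate_pow[OF yQ] \<pi>.hom_int_pow[OF assms(2)] by auto
qed

lemma (in normal) maximal_subgroup_comm_FactGroup:
  assumes "maximal_subgroup H G"
  shows "comm_group (G Mod H)"
proof -
  interpret Q: group "G Mod H" by (rule factorgroup_is_group)
  interpret \<pi>: group_hom G "G Mod H" "(#>) H"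
    by (simp add: group_hom_def group_hom_axioms_def is_group Q.is_group r_coset_hom_Mod)
  obtain y where y: "y \<in> carrier G" "y \<notin> H"
    using assms subset unfolding maximal_subgroup_def by blast
  then have yQ: "H #> y \<in> carrier (G Mod H)" by (simp add: FactGroup_def rcosetsI subset)
  have "carrier (G Mod H) = range (\<lambda>i::int. (H #> y) [^]\<^bsub>G Mod H\<^esub> i)"
  proof
    show "carrier (G Mod H) \<subseteq> range (\<lambda>i::int. (H #> y) [^]\<^bsub>G Mod H\<^esub> i)"
    proof
      fix C assume "C \<in> carrier (G Mod H)"
      then obtain x where "x \<in> carrier G" "C = H #> x"
        unfolding FactGroup_def RCOSETS_def by auto
      then obtain i :: int where "C = H #> y [^] i"
        using maximal_subgroup_rcoset_pow[OF assms y] by blast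
      then show "C \<in> range (\<lambda>i::int. (H #> y) [^]\<^bsub>G Mod H\<^esub> i)"
        using \<pi>.hom_int_pow[OF y(1), of i] by simp
    qed
    show "range (\<lambda>i::int. (H #> y) [^]\<^bsub>G Mod H\<^esub> i) \<subseteq> carrier (G Mod H)"
      using yQ by auto
  qed
  then have "cyclic_group (G Mod H)"
    using yQ Q.cyclic_group by blast
  then show ?thesis by (rule Q.cyclic_imp_abelian_group)
qed

lemma (in group) p_group_derived_subset_maximal_subgroup:
  assumes "p_group p G" "maximal_subgroup M G"
  shows "derived G (carrier G) \<subseteq> M"
  using p_group_maximal_subgroup_normal[OF assms]
  by (intro derived_minimal) (auto intro: normal.maximal_subgroup_comm_FactGroup[OF _ assms(2)])

section \<open>Cyclic direct factors of finite abelian \<open>p\<close>-groups\<close>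

lemma (in group) inj_on_int_pow_residues:
  assumes a: "a \<in> carrier G"
  shows "inj_on (\<lambda>i::int. a [^] i) {0..<int (ord a)}"
proof (rule inj_onI)
  fix i j assume "i \<in> {0..<int (ord a)}" "j \<in> {0..<int (ord a)}" "a [^] i = a [^] j"
  then have dvd: "int (ord a) dvd j - i" and bounds: "0 \<le> i" "i < ord a" "0 \<le> j" "j < ord a"
    using int_pow_eq[OF a] by auto
  show "i = j"
  proof (rule ccontr)
    assume "i \<noteq> j"
    then have "\<bar>int (ord a)\<bar> \<le> \<bar>j - i\<bar>" using dvd_imp_le_int[OF _ dvd] by simp
    then show False using bounds by linarith
  qed
qed

lemma (in group) integer_mod_group_iso_generate:
  assumes a: "a \<in> carrier G" and ord: "ord a \<noteq> 0"
  shows "(\<lambda>i. a [^] i) \<in> iso (integer_mod_group (ord a)) (subgroup_generated G (generate G {a}))"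
proof -
  let ?n = "int (ord a)" and ?Z = "integer_mod_group (ord a)"
  have carr: "carrier (subgroup_generated G (generate G {a})) = generate G {a}"
    using generate_is_subgroup a by (simp add: subgroup.carrier_subgroup_generated_subgroup)
  have Z: "carrier ?Z = {0..<?n}" using ord by (simp add: carrier_integer_mod_group)
  have pow_mod: "a [^] (i mod ?n) = a [^] i" for i
    using int_pow_eq[OF a] by (simp add: minus_mod_eq_mult_div)
  have "(\<lambda>i. a [^] i) \<in> hom ?Z (subgroup_generated G (generate G {a}))"
  proof (rule homI)
    show "a [^] i \<in> carrier (subgroup_generated G (generate G {a}))" for i :: int
      using carr generate_pow[OF a] by auto
    show "a [^] (i \<otimes>\<^bsub>?Z\<^esub> j) = a [^] i \<otimes>\<^bsub>subgroup_generated G (generate G {a})\<^esub> a [^] j"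
      for i j :: int
      using pow_mod[of "i + j"] a by (simp add: int_pow_mult)
  qed
  moreover have "bij_betw (\<lambda>i. a [^] i) (carrier ?Z) (generate G {a})"
  proof (rule bij_betw_imageI)
    show "inj_on (\<lambda>i. a [^] i) (carrier ?Z)"
      using inj_on_int_pow_residues[OF a] Z by simp
    show "(\<lambda>i. a [^] i) ` carrier ?Z = generate G {a}"
    proof
      show "generate G {a} \<subseteq> (\<lambda>i. a [^] i) ` carrier ?Z"
      proof
        fix b assume "b \<in> generate G {a}"
        then obtain i :: int where "b = a [^] i" using generate_pow[OF a] by blast
        then have "b = a [^] (i mod ?n)" using pow_mod by simp
        moreover have "i mod ?n \<in> carrier ?Z" using Z ord by simp
        ultimately show "b \<in> (\<lambda>i. a [^] i) ` carrier ?Z" by blast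
      qed
    qed (use generate_pow[OF a] in auto)
  qed
  ultimately show ?thesis unfolding iso_def using carr by simp
qed

lemma (in comm_group) iso_integer_mod_group_DirProd_complement:
  assumes a: "a \<in> carrier G" "ord a \<noteq> 0" and C: "subgroup C G"
    and disjoint: "generate G {a} \<inter> C \<subseteq> {\<one>}" and span: "generate G {a} <#> C = carrier G"
  shows "G \<cong> integer_mod_group (ord a) \<times>\<times> subgroup_generated G C"
proof -
  interpret group_disjoint_sum G "generate G {a}" C
    unfolding group_disjoint_sum_def using generate_is_subgroup a(1) C is_group by simp
  have "subgroup_generated G (generate G {a}) \<times>\<times> subgroup_generated G C \<cong> G"
    using iso_group_mul[OF comm_group_axioms] disjoint span by (blast intro: is_isoI)
  moreover have "integer_mod_group (ord a) \<times>\<times> subgroup_generated G C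
      \<cong> subgroup_generated G (generate G {a}) \<times>\<times> subgroup_generated G C"
    using is_isoI[OF integer_mod_group_iso_generate[OF a]]
    by (intro group.DirProd_iso_trans[OF group_integer_mod_group]) simp_all
  ultimately have "integer_mod_group (ord a) \<times>\<times> subgroup_generated G C \<cong> G"
    by (rule iso_trans[rotated])
  then show ?thesis
    by (rule group.iso_sym[OF DirProd_group[OF group_integer_mod_group group_subgroup_generated]])
qed

locale abelian_p_group = comm_group +
  fixes p :: nat
  assumes p_group: "p_group p G"
begin

lemma finite_carrier: "finite (carrier G)"
  using p_group unfolding p_group_def by blast

lemma prime: "Factorial_Ring.prime p"
  using p_group unfolding p_group_def by blast

text \<open>Since \<open>a\<close> has maximal order, the order of \<open>x\<^sup>p\<close> divides \<open>ord a / p\<close>. As \<open>\<langle>a\<rangle> \<inter> C\<close>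
  is trivial, so does the order of its component \<open>a\<^sup>s\<close>, whence \<open>p\<close> divides \<open>s\<close> unless \<open>a = 1\<close>.\<close>
lemma max_order_component_pow_prime:
  assumes a: "a \<in> carrier G" "\<forall>x \<in> carrier G. ord x dvd ord a"
    and C: "subgroup C G" "generate G {a} \<inter> C \<subseteq> {\<one>}"
    and x: "x \<in> carrier G" "x [^] p = a [^] (s::nat) \<otimes> c" "c \<in> C"
  shows "\<exists>t. a [^] s = a [^] (p * t)"
proof -
  obtain e where e: "ord a = p ^ e" using p_group_ord[OF p_group a(1)] by blast
  show ?thesis
  proof (cases "e = 0")
    case True
    then have "a = \<one>" using e a(1) ord_eq_1 by simp
    then show ?thesis by simp
  next
    case False
    have cc: "c \<in> carrier G" using x(3) C(1) subgroup.subset by blast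
    define f where "f = p ^ (e - 1)"
    have pf: "p * f = ord a" using e False unfolding f_def by (simp add: power_eq_if)
    have "(x [^] p) [^] f = \<one>" using a(2) x(1) pf pow_eq_id by (simp add: nat_pow_pow)
    then have "a [^] (s * f) \<otimes> c [^] f = \<one>"
      unfolding x(2) using a(1) cc by (simp add: nat_pow_distrib nat_pow_pow)
    then have "a [^] (s * f) = inv (c [^] f)" using a(1) cc by (simp add: inv_equality)
    also have "\<dots> \<in> C"
      using C(1) x(3) by (simp add: subgroup.m_inv_closed subgroup_nat_pow_closed)
    finally have "a [^] (s * f) \<in> generate G {a} \<inter> C"
      using generate_pow_nat_finite[OF finite_carrier a(1)] by blast
    then have "a [^] (s * f) = \<one>" using C(2) by blast
    then have "p * f dvd s * f" using pf a(1) pow_eq_id by simp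
    then have "p dvd s" using prime_gt_0_nat[OF prime] unfolding f_def by auto
    then show ?thesis by blast
  qed
qed

lemma complement_extension_element:
  assumes a: "a \<in> carrier G" "\<forall>x \<in> carrier G. ord x dvd ord a"
    and C: "subgroup C G" "generate G {a} \<inter> C \<subseteq> {\<one>}"
    and x: "x \<in> carrier G" "x \<notin> generate G {a} <#> C" "x [^] p \<in> generate G {a} <#> C"
  shows "\<exists>y \<in> carrier G - (generate G {a} <#> C). y [^] p \<in> C"
proof -
  let ?K = "generate G {a} <#> C"
  have K: "subgroup ?K G"
    using mult_subgroups generate_is_subgroup a(1) C(1) by simp
  obtain s :: nat and c where sc: "x [^] p = a [^] s \<otimes> c" "c \<in> C"
    using x(3) unfolding set_mult_def generate_pow_nat_finite[OF finite_carrier a(1)] by blast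
  obtain t where t: "a [^] s = a [^] (p * t)"
    using max_order_component_pow_prime[OF a C x(1) sc] by blast
  have cc: "c \<in> carrier G" using sc(2) C(1) subgroup.subset by blast
  define y where "y = x \<otimes> inv (a [^] t)"
  have yc: "y \<in> carrier G" using x(1) a(1) unfolding y_def by simp
  have "y [^] p = x [^] p \<otimes> inv (a [^] s)"
    unfolding y_def t using x(1) a(1)
    by (simp add: nat_pow_distrib nat_pow_inv nat_pow_pow mult.commute)
  then have "y [^] p = c" using sc a(1) cc by (simp add: m_ac)
  moreover have "y \<notin> ?K"
  proof
    assume "y \<in> ?K"
    moreover have "a [^] t \<in> ?K"
      using generate_pow_nat_finite[OF finite_carrier a(1)] subgroups_subset_set_mult(1)[OF _ C(1)]
        generate_is_subgroup a(1) by blast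
    ultimately have "y \<otimes> a [^] t \<in> ?K" by (rule subgroup.m_closed[OF K])
    then show False using x(1,2) a(1) unfolding y_def by (simp add: m_assoc)
  qed
  ultimately show ?thesis using yc sc(2) by blast
qed

lemma complement_extension_disjoint:
  assumes a: "a \<in> carrier G" and C: "subgroup C G" "generate G {a} \<inter> C \<subseteq> {\<one>}"
    and y: "y \<in> carrier G" "y \<notin> generate G {a} <#> C" "y [^] p \<in> C"
  shows "generate G {a} \<inter> (C <#> generate G {y}) \<subseteq> {\<one>}"
proof
  let ?K = "generate G {a} <#> C"
  have K: "subgroup ?K G"
    using mult_subgroups generate_is_subgroup a C(1) by simp
  have in_K: "generate G {a} \<subseteq> ?K" "C \<subseteq> ?K"
    using subgroups_subset_set_mult[OF generate_is_subgroup C(1)] a by auto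
  fix z assume z: "z \<in> generate G {a} \<inter> (C <#> generate G {y})"
  then obtain c i where ci: "z = c \<otimes> y [^] (i::nat)" "c \<in> C"
    unfolding set_mult_def generate_pow_nat_finite[OF finite_carrier y(1)] by blast
  have cc: "c \<in> carrier G" using ci(2) C(1) subgroup.subset by blast
  have "y [^] i = inv c \<otimes> z" using ci(1) cc y(1) by (simp add: m_assoc[symmetric])
  also have "\<dots> \<in> ?K"
    using z in_K ci(2) subgroup.m_inv_closed[OF C(1)] by (blast intro: subgroup.m_closed[OF K])
  finally have "p dvd i"
    using pow_mem_subgroup_prime_dvd[OF K prime y(1,2)] in_K(2) y(3) by blast
  then obtain q where "i = p * q" by blast
  then have "y [^] i \<in> C" using subgroup_nat_pow_closed[OF C(1) y(3), of q] y(1) by (simp add: nat_pow_pow)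
  then have "z \<in> C" using ci C(1) by (simp add: subgroup.m_closed)
  then show "z \<in> {\<one>}" using z C(2) by blast
qed

lemma cyclic_complement_exists:
  assumes a: "a \<in> carrier G" "\<forall>x \<in> carrier G. ord x dvd ord a"
  shows "\<exists>C. subgroup C G \<and> generate G {a} \<inter> C \<subseteq> {\<one>} \<and> generate G {a} <#> C = carrier G"
proof -
  define \<C> where "\<C> = {C. subgroup C G \<and> generate G {a} \<inter> C \<subseteq> {\<one>}}"
  have "finite \<C>"
    using finite_carrier subgroup.subset unfolding \<C>_def
    by (blast intro: finite_subset[of _ "Pow (carrier G)"])
  moreover have "{\<one>} \<in> \<C>" unfolding \<C>_def using triv_subgroup by blast
  ultimately obtain C where C: "C \<in> \<C>" and C_max: "\<forall>C' \<in> \<C>. C \<subseteq> C' \<longrightarrow> C = C'"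
    using finite_has_maximal[of \<C>] by blast
  have C_sub: "subgroup C G" "generate G {a} \<inter> C \<subseteq> {\<one>}" using C unfolding \<C>_def by auto
  let ?K = "generate G {a} <#> C"
  have K: "subgroup ?K G" using mult_subgroups generate_is_subgroup a(1) C_sub(1) by simp
  have "?K = carrier G"
  proof (rule ccontr)
    assume "?K \<noteq> carrier G"
    then obtain x where "x \<in> carrier G - ?K" "x [^] p \<in> ?K"
      using p_group_exists_pow_prime_mem[OF p_group K] by blast
    then obtain y where y: "y \<in> carrier G" "y \<notin> ?K" "y [^] p \<in> C"
      using complement_extension_element[OF a C_sub] by blast
    let ?C' = "C <#> generate G {y}"
    have "?C' \<in> \<C>"
      using mult_subgroups[OF C_sub(1) generate_is_subgroup] y(1)
        complement_extension_disjoint[OF a(1) C_sub y] unfolding \<C>_def by simp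
    moreover have "C \<subseteq> ?C'" "generate G {y} \<subseteq> ?C'"
      using subgroups_subset_set_mult[OF C_sub(1) generate_is_subgroup] y(1) by auto
    moreover have "y \<in> generate G {y}" by (rule generate.incl) simp
    moreover have "y \<notin> C"
      using y(2) subgroups_subset_set_mult(2)[OF generate_is_subgroup C_sub(1)] a(1) by auto
    ultimately show False using C_max by blast
  qed
  then show ?thesis using C_sub by blast
qed

end

section \<open>Exponent-critical \<open>p\<close>-groups of type \<open>\<A>\<close>\<close>

locale exponent_critical_type_A = group P for P (structure) +
  fixes p m :: nat and A :: "'a set" and a :: 'a
  assumes p_group: "p_group p P"
    and noncomm: "\<not> comm_group P"
    and critical: "exponent_critical P"
    and type_A: "type_A P"
    and exponent: "group_exponent P = p ^ m"
    and A_maximal: "maximal_subgroup A P"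
    and a_mem: "a \<in> A" and ord_a: "ord a = p ^ m"
begin

lemma A_subgroup: "subgroup A P"
  and A_proper: "A \<noteq> carrier P"
  using A_maximal unfolding maximal_subgroup_def by auto

lemma a_carrier: "a \<in> carrier P"
  using a_mem A_subgroup subgroup.subset by blast

lemma finite_carrier: "finite (carrier P)"
  using p_group unfolding p_group_def by blast

lemma A_comm: "comm_group (subgroup_generated P A)"
  using exponent_critical_subgroup_comm[OF critical A_subgroup A_proper a_mem] ord_a exponent by simp

lemma A_commute: "x \<in> A \<Longrightarrow> y \<in> A \<Longrightarrow> x \<otimes> y = y \<otimes> x"
  using comm_groupE(4)[OF A_comm] subgroup.carrier_subgroup_generated_subgroup[OF A_subgroup]
  by simp

lemma A_normal: "A \<lhd> P"
  using p_group_maximal_subgroup_normal[OF p_group A_maximal] .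

lemma comm_maximal_subgroup_eq_A:
  "maximal_subgroup M P \<Longrightarrow> comm_group (subgroup_generated P M) \<Longrightarrow> M = A"
  using type_A A_maximal A_comm unfolding type_A_def by blast

lemma max_order_mem_A:
  assumes "x \<in> carrier P" "ord x = p ^ m"
  shows "x \<in> A"
proof -
  obtain M where M: "maximal_subgroup M P" "x \<in> M"
    using noncomm_exists_maximal_subgroup_mem[OF finite_carrier noncomm assms(1)] by blast
  then have "comm_group (subgroup_generated P M)"
    using exponent_critical_subgroup_comm[OF critical _ _ M(2)] assms(2) exponent
    unfolding maximal_subgroup_def by simp
  then show ?thesis using comm_maximal_subgroup_eq_A M by blast
qed

lemma exists_noncomm_maximal_subgroup:
  "\<exists>M. maximal_subgroup M P \<and> \<not> comm_group (subgroup_generated P M)"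
proof -
  obtain x where x: "x \<in> carrier P" "x \<notin> A"
    using A_proper A_subgroup subgroup.subset by blast
  then obtain M where "maximal_subgroup M P" "x \<in> M"
    using noncomm_exists_maximal_subgroup_mem[OF finite_carrier noncomm] by blast
  then show ?thesis using comm_maximal_subgroup_eq_A x(2) by blast
qed

lemma noncomm_maximal_subgroup_ord_dvd:
  assumes "maximal_subgroup M P" "\<not> comm_group (subgroup_generated P M)" "z \<in> M"
  shows "ord z dvd p ^ (m - 1)"
proof -
  have M: "subgroup M P" "M \<noteq> carrier P" using assms(1) unfolding maximal_subgroup_def by auto
  then have "ord z \<noteq> p ^ m"
    using exponent_critical_subgroup_comm[OF critical M assms(3)] assms(2) exponent by auto
  then show ?thesis
    using p_group_ord_dvd_pred_exponent[OF p_group exponent] assms(3) M(1) subgroup.subset by blast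
qed

lemma derived_comm: "comm_group (subgroup_generated P (derived P (carrier P)))"
proof (rule group.group_comm_groupI)
  let ?D = "derived P (carrier P)"
  have "carrier (subgroup_generated P ?D) = ?D"
    by (simp add: derived_is_subgroup subgroup.carrier_subgroup_generated_subgroup)
  moreover have "?D \<subseteq> A"
    using p_group_derived_subset_maximal_subgroup[OF p_group A_maximal] .
  ultimately show "x \<otimes>\<^bsub>subgroup_generated P ?D\<^esub> y = y \<otimes>\<^bsub>subgroup_generated P ?D\<^esub> x"
    if "x \<in> carrier (subgroup_generated P ?D)" "y \<in> carrier (subgroup_generated P ?D)" for x y
    using that by (simp add: A_commute subsetD)
qed simp

lemma derived_exponent_dvd:
  "group_exponent (subgroup_generated P (derived P (carrier P))) dvd p ^ (m - 1)"
proof -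
  obtain M where M: "maximal_subgroup M P" "\<not> comm_group (subgroup_generated P M)"
    using exists_noncomm_maximal_subgroup by blast
  have "derived P (carrier P) \<subseteq> M"
    using p_group_derived_subset_maximal_subgroup[OF p_group M(1)] .
  then show ?thesis
    using noncomm_maximal_subgroup_ord_dvd[OF M]
    by (auto simp: group_exponent_subgroup_generated derived_is_subgroup Lcm_dvd_iff)
qed

text \<open>As \<open>P = \<langle>a\<rangle>M\<close> for a non-abelian maximal subgroup \<open>M\<close>, write \<open>c = z a\<^sup>i\<close> with
  \<open>z \<in> M \<inter> A\<close>. Then \<open>c\<close> and \<open>a\<^sup>i\<close> have the same \<open>p\<^sup>m\<^sup>-\<^sup>1\<close>-th power, which lies in
  \<open>\<langle>a\<rangle> \<inter> C = 1\<close>.\<close>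
lemma complement_ord_dvd:
  assumes C: "subgroup C P" "C \<subseteq> A" "generate P {a} \<inter> C \<subseteq> {\<one>}" and c: "c \<in> C"
  shows "ord c dvd p ^ (m - 1)"
proof -
  let ?N = "p ^ (m - 1)"
  obtain M where M: "maximal_subgroup M P" "\<not> comm_group (subgroup_generated P M)"
    using exists_noncomm_maximal_subgroup by blast
  have "a \<notin> M"
    using M exponent_critical_subgroup_comm[OF critical] ord_a exponent
    unfolding maximal_subgroup_def by auto
  have cc: "c \<in> carrier P" using c C(1) subgroup.subset by blast
  obtain i :: int where "M #> c = M #> a [^] i"
    using normal.maximal_subgroup_rcoset_pow[OF p_group_maximal_subgroup_normal[OF p_group M(1)]
        M(1) a_carrier \<open>a \<notin> M\<close> cc] by blast
  then have "c \<in> M #> a [^] i"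
    using rcos_self[OF cc] M(1) unfolding maximal_subgroup_def by blast
  then obtain z where z: "z \<in> M" "c = z \<otimes> a [^] i"
    unfolding r_coset_def by blast
  have ai: "a [^] i \<in> A" "a [^] i \<in> carrier P"
    using subgroup_int_pow_closed[OF A_subgroup a_mem] a_carrier by auto
  have zc: "z \<in> carrier P" using z(1) M(1) subgroup.subset unfolding maximal_subgroup_def by blast
  have "z = c \<otimes> inv (a [^] i)" using z(2) zc ai(2) by (simp add: m_assoc)
  then have zA: "z \<in> A"
    using C(2) c ai(1) A_subgroup by (simp add: subgroup.m_closed subgroup.m_inv_closed subsetD)
  have "z [^] ?N = \<one>"
    using noncomm_maximal_subgroup_ord_dvd[OF M z(1)] pow_eq_id[OF zc] by blast
  then have "c [^] ?N = (a [^] i) [^] ?N"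
    using z(2) pow_mult_distrib[OF A_commute[OF zA ai(1)] zc ai(2)] ai(2) by simp
  moreover have "(a [^] i) [^] ?N \<in> generate P {a}"
    using subgroup_nat_pow_closed[OF generate_is_subgroup] generate_pow[OF a_carrier] a_carrier
    by blast
  moreover have "c [^] ?N \<in> C" using subgroup_nat_pow_closed[OF C(1) c] .
  ultimately have "c [^] ?N = \<one>" using C(3) by auto
  then show ?thesis using pow_eq_id[OF cc] by blast
qed

lemma A_iso_cyclic_times_complement:
  "\<exists>S :: 'a monoid. group S \<and> group_exponent S dvd p ^ (m - 1) \<and>
     subgroup_generated P A \<cong> integer_mod_group (p ^ m) \<times>\<times> S"
proof -
  let ?A = "subgroup_generated P A"
  have A_eq: "?A = P\<lparr>carrier := A\<rparr>"
    by (rule subgroup_generated_eq_carrier_update[OF A_subgroup])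
  interpret AG: abelian_p_group ?A p
    using A_comm p_group_subgroup[OF p_group A_subgroup] A_eq
    by (simp add: abelian_p_group_def abelian_p_group_axioms_def)
  have carrier_A: "carrier ?A = A" by (simp add: A_eq)
  have a: "a \<in> carrier ?A" using a_mem carrier_A by simp
  have ord_max: "\<forall>x \<in> carrier ?A. AG.ord x dvd AG.ord a"
    using ord_dvd_group_exponent A_subgroup subgroup.subset
    by (auto simp: ord_subgroup_generated carrier_A exponent ord_a)
  obtain C where C: "subgroup C ?A" "generate ?A {a} \<inter> C \<subseteq> {\<one>\<^bsub>?A\<^esub>}"
      "generate ?A {a} <#>\<^bsub>?A\<^esub> C = carrier ?A"
    using AG.cyclic_complement_exists[OF a ord_max] by blast
  have "AG.ord a = p ^ m" by (simp add: ord_subgroup_generated ord_a)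
  moreover have "p ^ m \<noteq> 0" using AG.prime by (simp add: prime_gt_0_nat)
  ultimately have iso: "?A \<cong> integer_mod_group (p ^ m) \<times>\<times> subgroup_generated ?A C"
    using AG.iso_integer_mod_group_DirProd_complement[OF a _ C] by simp
  have C_P: "subgroup C P" "C \<subseteq> A"
    using C(1) carrier_A subgroup_subgroup_generated_iff by auto
  have "generate ?A {a} = generate P {a}"
    using generate_consistent[of "{a}" A] a_mem A_subgroup by (simp add: A_eq)
  then have "generate P {a} \<inter> C \<subseteq> {\<one>}" using C(2) by simp
  then have exp_C: "group_exponent (subgroup_generated ?A C) dvd p ^ (m - 1)"
    using complement_ord_dvd[OF C_P]
    by (simp add: AG.group_exponent_subgroup_generated[OF C(1)] ord_subgroup_generated Lcm_dvd_iff)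
  let ?S = "image_group id (subgroup_generated ?A C)"
  txt \<open>The statement asks for a plain \<open>'a monoid\<close>; \<open>image_group id\<close> forgets the extra
    record fields.\<close>
  have S: "group ?S" "subgroup_generated ?A C \<cong> ?S"
      "group_exponent ?S = group_exponent (subgroup_generated ?A C)"
    using group.image_group_id[OF AG.group_subgroup_generated] by auto
  have "?A \<cong> integer_mod_group (p ^ m) \<times>\<times> ?S"
    using iso group.DirProd_iso_trans[OF group_integer_mod_group iso_refl S(2)] by (rule iso_trans)
  then show ?thesis using S(1,3) exp_C by auto
qed

end

theorem mainTheorem12:
  fixes P :: "('a, 'b) monoid_scheme" and p m :: nat and A :: "'a set"
  assumes "p_group p P"
    and "\<not> comm_group P"
    and "exponent_critical P"
    and "type_A P"
    and "group_exponent P = p ^ m"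
    and "maximal_subgroup A P"
    and "\<exists>x\<in>A. group.ord P x = p ^ m"
  shows "(comm_group (subgroup_generated P A) \<and> A \<lhd> P \<and>
         (\<forall>x\<in>carrier P. group.ord P x = p ^ m \<longrightarrow> x \<in> A)) \<and>
         (\<exists>S :: 'a monoid. group S \<and> group_exponent S dvd p ^ (m - 1) \<and>
           subgroup_generated P A \<cong> integer_mod_group (p ^ m) \<times>\<times> S) \<and>
         (comm_group (subgroup_generated P (derived P (carrier P))) \<and>
         group_exponent (subgroup_generated P (derived P (carrier P))) dvd p ^ (m - 1))"
proof -
  obtain a where "a \<in> A" "group.ord P a = p ^ m" using assms(7) by blast
  then interpret exponent_critical_type_A P p m A a
    using assms(1-6) by (simp add: exponent_critical_type_A_def exponent_critical_type_A_axioms_def p_group_def)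
  show ?thesis
    using A_comm A_normal max_order_mem_A A_iso_cyclic_times_complement derived_comm derived_exponent_dvd
    by blast
qed

end
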